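(* Let $n\ge 3$ and let $\mathcal{H}$ be the associating hypergraph on $M(D_n,2)$. Then the strong chromatic number is $\overline{\psi}(\mathcal{H})=4n$.
   Context: $D_n=\langle x,y\mid x^n=y^2=1,\ xy=yx^{-1}\rangle$. $M(D_n,2)=\{(g,\alpha): g\in D_n,\ \alpha\in\mathbb{Z}_2\}$ with $(g_1,\alpha_1)\circ(g_2,\alpha_2)=(g_1^{1-\alpha_2} g_2^{(-1)^{\alpha_1}} g_1^{\alpha_2},\ \alpha_1+\alpha_2)$. The associating hypergraph $\mathcal{H}$ has vertex set $M(D_n,2)$ ($4n$ vertices), and a 3-element set $\{a,b,c\}$ of distinct elements is a hyperedge when $(a\circ b)\circ c=a\circ(b\circ c)$. A strong coloring assigns colors to vertices so that any two vertices lying in a common hyperedge receive different colors; $\overline{\psi}(\mathcal{H})$ is the minimum number of colors in a strong coloring. *)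

theory Defs
  imports Main
begin

text \<open>Dihedral group D_n of order 2n: the element (k, s) stands for x^k y^s,
  with k in {0..<n} and s = True meaning y^1.  Relations x^n = y^2 = 1, xy = yx^{-1}
  give x^a y^s * x^b y^t = x^(a + (-1)^s b) y^(s+t).\<close>

type_synonym dih = "nat \<times> bool"

definition dih_carrier :: "nat \<Rightarrow> dih set" where
  "dih_carrier n = {0..<n} \<times> (UNIV :: bool set)"

definition dih_one :: dih where
  "dih_one = (0, False)"

definition dih_mult :: "nat \<Rightarrow> dih \<Rightarrow> dih \<Rightarrow> dih" where
  "dih_mult n g h = (case g of (a, s) \<Rightarrow> case h of (b, t) \<Rightarrow>
      ((a + (if s then n - b else b)) mod n, s \<noteq> t))"

definition dih_inv :: "nat \<Rightarrow> dih \<Rightarrow> dih" where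
  "dih_inv n g = (case g of (a, s) \<Rightarrow> if s then (a, s) else ((n - a) mod n, False))"

text \<open>M(D_n,2): pairs (g, alpha) with alpha in Z_2 (True = 1), and
  (g1,a1) o (g2,a2) = (g1^(1-a2) g2^((-1)^a1) g1^a2, a1 + a2).\<close>

type_synonym mvert = "dih \<times> bool"

definition M_carrier :: "nat \<Rightarrow> mvert set" where
  "M_carrier n = dih_carrier n \<times> (UNIV :: bool set)"

definition M_op :: "nat \<Rightarrow> mvert \<Rightarrow> mvert \<Rightarrow> mvert" where
  "M_op n p q = (case p of (g1, a1) \<Rightarrow> case q of (g2, a2) \<Rightarrow>
     (dih_mult n (dih_mult n (if a2 then dih_one else g1) (if a1 then dih_inv n g2 else g2))
                 (if a2 then g1 else dih_one),
      a1 \<noteq> a2))"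

definition assoc_hyperedges :: "nat \<Rightarrow> mvert set set" where
  "assoc_hyperedges n = {{a, b, c} | a b c.
     a \<in> M_carrier n \<and> b \<in> M_carrier n \<and> c \<in> M_carrier n \<and>
     a \<noteq> b \<and> a \<noteq> c \<and> b \<noteq> c \<and>
     M_op n (M_op n a b) c = M_op n a (M_op n b c)}"

definition strong_coloring :: "'v set \<Rightarrow> 'v set set \<Rightarrow> ('v \<Rightarrow> nat) \<Rightarrow> bool" where
  "strong_coloring V E col \<longleftrightarrow>
     (\<forall>e\<in>E. \<forall>u\<in>e. \<forall>v\<in>e. u \<noteq> v \<longrightarrow> col u \<noteq> col v)"

definition strong_chromatic_number :: "'v set \<Rightarrow> 'v set set \<Rightarrow> nat" where
  "strong_chromatic_number V E =
     (LEAST k. \<exists>col. strong_coloring V E col \<and> card (col ` V) = k)"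

end

theory Submission
  imports Defs
begin

text \<open>The pair ((0, False), False) is a two-sided identity of M(D_n,2), so every 3-set
  {x, y, 1} of distinct vertices is a hyperedge: (x y) 1 = x y = x (y 1).  Since there are
  4n \<ge> 4 vertices, any two distinct vertices lie in a common hyperedge, hence a strong
  colouring must be injective, and an injective colouring needs exactly 4n colours.\<close>

lemma strong_chromatic_number_eq_card:
  assumes "finite V"
    and edges_in: "\<And>e. e \<in> E \<Longrightarrow> e \<subseteq> V"
    and pairs_covered: "\<And>u v. u \<in> V \<Longrightarrow> v \<in> V \<Longrightarrow> u \<noteq> v \<Longrightarrow> \<exists>e\<in>E. u \<in> e \<and> v \<in> e"
  shows "strong_chromatic_number V E = card V"
proof -
  have card_colours: "card (col ` V) = card V" if "strong_coloring V E col" for col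
  proof -
    have "inj_on col V"
    proof (rule inj_onI, rule ccontr)
      fix u v assume "u \<in> V" "v \<in> V" "col u = col v" "u \<noteq> v"
      with pairs_covered that show False unfolding strong_coloring_def by blast
    qed
    then show ?thesis by (rule card_image)
  qed
  obtain col :: "'a \<Rightarrow> nat" and k where "col ` V = {i. i < k}" "inj_on col V"
    using finite_imp_inj_to_nat_seg[OF \<open>finite V\<close>] by blast
  then have "strong_coloring V E col"
    unfolding strong_coloring_def by (meson edges_in inj_on_def subsetD)
  then show ?thesis
    unfolding strong_chromatic_number_def
    by (intro Least_equality) (use card_colours in auto)
qed

definition M_one :: mvert where
  "M_one = (dih_one, False)"

lemma mem_M_carrier_iff: "((a, s), t) \<in> M_carrier n \<longleftrightarrow> a < n"
  by (simp add: M_carrier_def dih_carrier_def)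

lemma finite_M_carrier: "finite (M_carrier n)"
  by (simp add: M_carrier_def dih_carrier_def)

lemma card_M_carrier: "card (M_carrier n) = 4 * n"
  by (simp add: M_carrier_def dih_carrier_def card_cartesian_product)

lemma M_one_in_carrier: "n > 0 \<Longrightarrow> M_one \<in> M_carrier n"
  by (simp add: M_one_def dih_one_def mem_M_carrier_iff)

lemma M_op_closed: "n > 0 \<Longrightarrow> M_op n x y \<in> M_carrier n"
  by (auto simp: M_op_def dih_mult_def mem_M_carrier_iff M_carrier_def dih_carrier_def
      split: prod.splits)

lemma M_op_M_one_right: "n > 0 \<Longrightarrow> x \<in> M_carrier n \<Longrightarrow> M_op n x M_one = x"
  by (cases x) (auto simp: M_one_def M_op_def dih_mult_def dih_one_def dih_inv_def mem_M_carrier_iff)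

lemma assoc_hyperedges_subset: "e \<in> assoc_hyperedges n \<Longrightarrow> e \<subseteq> M_carrier n"
  unfolding assoc_hyperedges_def by blast

lemma insert_M_one_in_assoc_hyperedges:
  assumes "n > 0" "x \<in> M_carrier n" "y \<in> M_carrier n" "x \<noteq> y" "x \<noteq> M_one" "y \<noteq> M_one"
  shows "{x, y, M_one} \<in> assoc_hyperedges n"
proof -
  have "M_op n (M_op n x y) M_one = M_op n x (M_op n y M_one)"
    using assms by (simp add: M_op_M_one_right M_op_closed)
  then show ?thesis
    unfolding assoc_hyperedges_def using assms M_one_in_carrier by blast
qed

lemma assoc_hyperedges_cover_pairs:
  assumes "n > 0" and u: "u \<in> M_carrier n" and v: "v \<in> M_carrier n" and "u \<noteq> v"
  shows "\<exists>e\<in>assoc_hyperedges n. u \<in> e \<and> v \<in> e"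
proof -
  have "card {u, v, M_one} \<le> 3"
    using card_length[of "[u, v, M_one]"] by simp
  then have "card {u, v, M_one} < card (M_carrier n)"
    using card_M_carrier[of n] \<open>n > 0\<close> by linarith
  then obtain w where w: "w \<in> M_carrier n" "w \<notin> {u, v, M_one}"
    by (metis card_mono finite.emptyI finite.insertI not_less subsetI)
  obtain x y where "x \<in> M_carrier n" "y \<in> M_carrier n" "x \<noteq> y" "x \<noteq> M_one" "y \<noteq> M_one"
    and "{u, v} \<subseteq> {x, y, M_one}"
  proof (cases "u = M_one \<or> v = M_one")
    case True
    then show ?thesis using that[of u w] that[of v w] u v w \<open>u \<noteq> v\<close> by auto
  next
    case False
    then show ?thesis using that[of u v] u v \<open>u \<noteq> v\<close> by auto
  qed
  then show ?thesis
    using insert_M_one_in_assoc_hyperedges[OF \<open>n > 0\<close>] by (metis insert_subset)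
qed

theorem mainTheorem9:
  fixes n :: nat
  assumes "n \<ge> 3"
  shows "strong_chromatic_number (M_carrier n) (assoc_hyperedges n) = 4 * n"
proof -
  have "n > 0" using assms by simp
  then have "strong_chromatic_number (M_carrier n) (assoc_hyperedges n) = card (M_carrier n)"
    by (intro strong_chromatic_number_eq_card finite_M_carrier assoc_hyperedges_subset
        assoc_hyperedges_cover_pairs)
  then show ?thesis by (simp add: card_M_carrier)
qed

end
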